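(* For $n=0,1,2,\ldots$ let $\bar H^{(2)}_n=\sum_{0<j\leqslant n}\frac{1}{(2j-1)^2}$. Then $$\sum_{k=1}^\infty\frac{\binom{2k}k\bar H^{(2)}_k}{(2k+1)16^k}=\frac{\pi^3}{648},\qquad \sum_{k=1}^\infty\frac{\binom{2k}k\bar H^{(2)}_k}{(2k+1)8^k}=\frac{\pi^3}{192\sqrt2},\qquad \sum_{k=1}^\infty\frac{\binom{2k}k\bar H^{(2)}_k}{2k+1}\left(\frac3{16}\right)^k=\frac{\pi^3}{81\sqrt3},$$ and $$\sum_{k=0}^\infty\frac{\binom{2k}k\bar H^{(2)}_k}{(2k+1)(-32)^k}=-\frac{\sqrt2}{24}\log^3 2,\qquad \sum_{k=1}^\infty\frac{\binom{2k}k\bar H^{(2)}_k}{(2k+1)(-12)^k}=-\frac{\sqrt3}{48}\log^3 3,$$ $$\sum_{k=1}^\infty\frac{\binom{2k}k\bar H^{(2)}_k}{(2k+1)(-16)^k}=-\frac13\log^3\frac{\sqrt5+1}2.$$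
   Context: $\log$ denotes the natural logarithm. Note $\bar H^{(2)}_0=0$. *)

theory Defs
  imports "HOL-Analysis.Analysis"
begin

definition Hbar2 :: "nat \<Rightarrow> real" where
  "Hbar2 n = (\<Sum>j=1..n. 1 / (2 * real j - 1)^2)"

definition cterm :: "real \<Rightarrow> nat \<Rightarrow> real" where
  "cterm x k = real ((2*k) choose k) * Hbar2 k / (2 * real k + 1) * x ^ k"

end

theory Submission
  imports Defs "HOL-Analysis.FPS_Convergence"
begin

(* Let P_s(y) = sum_k s^k binom(2k,k) y^(2k+1) / (4^k (2k+1)) and let Q_s(y) be the same series with
   the extra factor Hbar2 k; P_1 is arcsin and P_(-1) is arsinh.  The recurrences of the coefficients
   say that the operator (1 - s y^2) D^2 - s y D kills P_s and maps Q_s to s P_s.  If g' = h, h' = -s g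
   and h^2 + s g^2 = 1 (sin and cos for s = 1, sinh and cosh for s = -1), then along y = g t this
   operator is d^2/dt^2, so integrating twice from t = 0 gives P_s (g t) = t and Q_s (g t) = s t^3 / 6.
   The series of the theorem at x = s y^2 / 4 is Q_s(y) / y, and the six values come from
   t = pi/6, pi/4, pi/3 for sin and t = ln (sqrt 2), ln (sqrt 3), ln ((sqrt 5 + 1) / 2) for sinh. *)

lemma central_binomial_Suc:
  "Suc k * ((2 * Suc k) choose Suc k) = 2 * (2 * k + 1) * ((2 * k) choose k)"
  by (metis Suc_eq_plus1 Suc_times_binomial Suc_times_binomial_add
    add_2_eq_Suc add_mult_distrib mult_Suc_right nat_mult_1 one_add_one)

lemma Hbar2_0 [simp]: "Hbar2 0 = 0"
  by (simp add: Hbar2_def)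

lemma Hbar2_Suc: "Hbar2 (Suc k) = Hbar2 k + 1 / (2 * real k + 1)^2"
  by (simp add: Hbar2_def)

lemma Hbar2_nonneg: "0 \<le> Hbar2 k"
  unfolding Hbar2_def by (intro sum_nonneg) simp

lemma Hbar2_le: "Hbar2 k \<le> real k"
proof -
  have "Hbar2 k \<le> (\<Sum>j=1..k. 1)"
    unfolding Hbar2_def by (intro sum_mono) (simp add: power_le_one_iff)
  then show ?thesis by simp
qed

definition arcsin_coeff :: "nat \<Rightarrow> real" where
  "arcsin_coeff k = real ((2 * k) choose k) / (4 ^ k * (2 * real k + 1))"

lemma arcsin_coeff_Suc:
  "(2 * real k + 3) * (2 * real k + 2) * arcsin_coeff (Suc k) = (2 * real k + 1)^2 * arcsin_coeff k"
proof -
  define A B where "A = real ((2 * k) choose k)" and "B = real ((2 * Suc k) choose Suc k)"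
  have rec: "(real k + 1) * B = 2 * (2 * real k + 1) * A"
    unfolding A_def B_def using arg_cong[OF central_binomial_Suc[of k], of real]
    by (simp del: binomial_Suc_Suc add: algebra_simps)
  have Suc_k: "arcsin_coeff (Suc k) = B / (4 * 4 ^ k * (2 * real k + 3))"
    by (simp del: binomial_Suc_Suc add: arcsin_coeff_def B_def algebra_simps)
  have "(2 * real k + 3) * (2 * real k + 2) * arcsin_coeff (Suc k) = (real k + 1) * B / (2 * 4 ^ k)"
    unfolding Suc_k by (simp add: divide_simps)
  also have "\<dots> = (2 * real k + 1) * A / 4 ^ k"
    unfolding rec by (simp add: divide_simps)
  also have "\<dots> = (2 * real k + 1)^2 * arcsin_coeff k"
    unfolding arcsin_coeff_def A_def [symmetric] by (simp add: divide_simps power2_eq_square)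
  finally show ?thesis .
qed

lemma cterm_conv_arcsin_coeff: "cterm x k = arcsin_coeff k * Hbar2 k * (4 * x) ^ k"
  by (simp add: cterm_def arcsin_coeff_def power_mult_distrib divide_simps)

lemma cterm_0 [simp]: "cterm x 0 = 0"
  by (simp add: cterm_def)

lemma cterm_Suc_sums_iff [simp]: "(\<lambda>k. cterm x (Suc k)) sums v \<longleftrightarrow> cterm x sums v"
  using sums_Suc_iff[of "cterm x" v] by simp

lemma arcsin_coeff_Hbar2_Suc:
  "(2 * real k + 3) * (2 * real k + 2) * (arcsin_coeff (Suc k) * Hbar2 (Suc k))
     - (2 * real k + 1)^2 * (arcsin_coeff k * Hbar2 k) = arcsin_coeff k"
proof -
  have "(2 * real k + 3) * (2 * real k + 2) * (arcsin_coeff (Suc k) * Hbar2 (Suc k))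
      = (2 * real k + 1)^2 * arcsin_coeff k * (Hbar2 k + 1 / (2 * real k + 1)^2)"
    by (simp add: arcsin_coeff_Suc Hbar2_Suc flip: mult.assoc)
  then show ?thesis
    by (simp add: algebra_simps)
qed

lemma arcsin_coeff_nonneg: "0 \<le> arcsin_coeff k"
  by (simp add: arcsin_coeff_def)

lemma arcsin_coeff_le: "arcsin_coeff k \<le> 1 / (2 * real k + 1)"
proof -
  have "real ((2 * k) choose k) \<le> 2 ^ (2 * k)"
    using binomial_le_pow2[of "2 * k" k] by (metis of_nat_le_iff of_nat_numeral of_nat_power)
  also have "(2::real) ^ (2 * k) = 4 ^ k"
    by (simp add: power_mult)
  finally show ?thesis
    by (simp add: arcsin_coeff_def divide_simps)
qed

lemma abs_arcsin_coeff_le_1: "\<bar>arcsin_coeff k\<bar> \<le> 1"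
  using order_trans[OF arcsin_coeff_le, of k 1] arcsin_coeff_nonneg[of k] by simp

lemma abs_arcsin_coeff_Hbar2_le_1: "\<bar>arcsin_coeff k * Hbar2 k\<bar> \<le> 1"
proof -
  have "arcsin_coeff k * Hbar2 k \<le> real k / (2 * real k + 1)"
    using mult_mono[OF arcsin_coeff_le Hbar2_le] arcsin_coeff_nonneg Hbar2_nonneg by simp
  also have "\<dots> \<le> 1"
    by simp
  finally show ?thesis
    using arcsin_coeff_nonneg[of k] Hbar2_nonneg[of k] by simp
qed

definition chebyshev_op :: "real \<Rightarrow> real fps \<Rightarrow> real fps" where
  "chebyshev_op s f =
     fps_of_poly [:1, 0, -s:] * fps_deriv (fps_deriv f) + fps_of_poly [:0, -s:] * fps_deriv f"

lemma fps_nth_chebyshev_op: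
  "fps_nth (chebyshev_op s f) n =
     real (n + 2) * real (n + 1) * fps_nth f (n + 2) - s * real n ^ 2 * fps_nth f n"
proof -
  have p2: "fps_of_poly [:1, 0, -s:] = 1 - fps_const s * fps_X ^ 2" 
    by (intro fps_ext) (simp add: coeff_pCons split: nat.split)
  have p1: "fps_of_poly [:0, -s:] = - fps_const s * fps_X"
    by (intro fps_ext) (simp add: coeff_pCons split: nat.split)
  show ?thesis
    unfolding chebyshev_op_def p1 p2
    by (simp add: algebra_simps fps_X_power_mult_nth power2_eq_square Suc_diff_Suc)
qed

lemma fps_conv_radius_fps_of_poly_mult:
  "fps_conv_radius (f :: 'a :: {banach, real_normed_div_algebra, comm_ring_1} fps)
     \<le> fps_conv_radius (fps_of_poly p * f)"
  using fps_conv_radius_mult[of "fps_of_poly p" f] by simp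

lemma eval_fps_chebyshev_op:
  fixes f :: "real fps"
  assumes y: "norm y < fps_conv_radius f"
  shows "eval_fps (chebyshev_op s f) y =
    (1 - s * y ^ 2) * eval_fps (fps_deriv (fps_deriv f)) y - s * y * eval_fps (fps_deriv f) y"
proof -
  have y1: "norm y < fps_conv_radius (fps_deriv f)"
    using y fps_conv_radius_deriv[of f] by (rule less_le_trans)
  have y2: "norm y < fps_conv_radius (fps_deriv (fps_deriv f))"
    using y1 fps_conv_radius_deriv[of "fps_deriv f"] by (rule less_le_trans)
  have "eval_fps (chebyshev_op s f) y = eval_fps (fps_of_poly [:1, 0, -s:] * fps_deriv (fps_deriv f)) y
      + eval_fps (fps_of_poly [:0, -s:] * fps_deriv f) y"
    unfolding chebyshev_op_def
    using y1 y2 fps_conv_radius_fps_of_poly_mult by (intro eval_fps_add) (auto intro: less_le_trans)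
  also have "\<dots> = poly [:1, 0, -s:] y * eval_fps (fps_deriv (fps_deriv f)) y
      + poly [:0, -s:] y * eval_fps (fps_deriv f) y"
    using y1 y2 by (simp add: eval_fps_mult)
  finally show ?thesis
    by (simp add: algebra_simps power2_eq_square)
qed

definition odd_fps :: "real \<Rightarrow> (nat \<Rightarrow> real) \<Rightarrow> real fps" where
  "odd_fps s a = Abs_fps (\<lambda>n. if odd n then s ^ (n div 2) * a (n div 2) else 0)"

lemma odd_fps_0 [simp]: "odd_fps s (\<lambda>_. 0) = 0"
  by (rule fps_ext) (simp add: odd_fps_def)

lemma chebyshev_op_odd_fps:
  assumes "\<And>k. (2 * real k + 3) * (2 * real k + 2) * a (Suc k) - (2 * real k + 1)^2 * a k = b k"
  shows "chebyshev_op s (odd_fps s a) = fps_const s * odd_fps s b"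
proof (rule fps_ext)
  fix n
  show "fps_nth (chebyshev_op s (odd_fps s a)) n = fps_nth (fps_const s * odd_fps s b) n"
  proof (cases "odd n")
    case True
    then obtain k where n: "n = 2 * k + 1"
      using oddE by blast
    have "n + 2 = 2 * Suc k + 1"
      using n by simp
    then have "fps_nth (chebyshev_op s (odd_fps s a)) n
        = s ^ Suc k * ((2 * real k + 3) * (2 * real k + 2) * a (Suc k) - (2 * real k + 1)^2 * a k)"
      unfolding fps_nth_chebyshev_op by (simp add: odd_fps_def n algebra_simps)
    then show ?thesis
      by (simp add: assms odd_fps_def n)
  qed (simp add: fps_nth_chebyshev_op odd_fps_def)
qed

lemma fps_conv_radius_ge_1_if_bounded:
  fixes f :: "real fps"
  assumes "\<And>n. \<bar>fps_nth f n\<bar> \<le> C"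
  shows "1 \<le> fps_conv_radius f"
  unfolding fps_conv_radius_def
proof (rule conv_radius_geI_ex')
  fix r :: real
  assume r: "0 < r" "ereal r < 1"
  show "summable (\<lambda>n. fps_nth f n * of_real r ^ n)"
  proof (rule summable_comparison_test)
    show "\<exists>N. \<forall>n\<ge>N. norm (fps_nth f n * of_real r ^ n) \<le> C * r ^ n"
      using assms r by (auto simp: abs_mult intro!: mult_right_mono)
    show "summable (\<lambda>n. C * r ^ n)"
      using r by (intro summable_mult summable_geometric) auto
  qed
qed

lemma fps_conv_radius_odd_fps:
  assumes "\<bar>s\<bar> \<le> 1" and "\<And>k. \<bar>a k\<bar> \<le> 1"
  shows "1 \<le> fps_conv_radius (odd_fps s a)"
proof (rule fps_conv_radius_ge_1_if_bounded)
  fix n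
  have "\<bar>s ^ (n div 2) * a (n div 2)\<bar> \<le> 1 * 1"
    unfolding abs_mult power_abs using assms by (intro mult_mono power_le_one) auto
  then show "\<bar>fps_nth (odd_fps s a) n\<bar> \<le> 1"
    by (simp add: odd_fps_def)
qed

lemma sums_odd_fps:
  assumes "norm y < fps_conv_radius (odd_fps s a)"
  shows "(\<lambda>k. s ^ k * a k * y ^ (2 * k + 1)) sums eval_fps (odd_fps s a) y"
proof -
  have "strict_mono (\<lambda>k::nat. 2 * k + 1)"
    by (auto simp: strict_mono_def)
  moreover have "fps_nth (odd_fps s a) n * y ^ n = 0" if "n \<notin> range (\<lambda>k. 2 * k + 1)" for n
    using that by (auto simp: odd_fps_def elim!: oddE)
  ultimately have "(\<lambda>k. fps_nth (odd_fps s a) (2 * k + 1) * y ^ (2 * k + 1)) sums eval_fps (odd_fps s a) y"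
    using sums_mono_reindex[of "\<lambda>k. 2 * k + 1" "\<lambda>n. fps_nth (odd_fps s a) n * y ^ n"]
      sums_eval_fps[OF assms] by simp
  then show ?thesis
    by (simp add: odd_fps_def)
qed

lemma antiderivative_unique_interval:
  fixes u v w :: "real \<Rightarrow> real"
  assumes "\<And>t. t \<in> {a<..<b} \<Longrightarrow> (u has_real_derivative w t) (at t)"
    and "\<And>t. t \<in> {a<..<b} \<Longrightarrow> (v has_real_derivative w t) (at t)"
    and "x0 \<in> {a<..<b}" "x \<in> {a<..<b}" "u x0 = v x0"
  shows "u x = v x"
proof -
  have "\<exists>c. \<forall>t\<in>{a<..<b}. u t - v t = c"
  proof (rule has_field_derivative_zero_constant)
    fix t assume "t \<in> {a<..<b}"
    from DERIV_diff[OF assms(1,2)[OF this]]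
    show "((\<lambda>t. u t - v t) has_real_derivative 0) (at t within {a<..<b})"
      by (simp add: has_field_derivative_at_within)
  qed simp
  then obtain c where "\<forall>t\<in>{a<..<b}. u t - v t = c"
    by blast
  then show ?thesis
    using assms(3-5) by (metis eq_iff_diff_eq_0)
qed

locale sine_pair =
  fixes s r :: real and g h :: "real \<Rightarrow> real"
  assumes abs_s_le_1: "\<bar>s\<bar> \<le> 1"
    and g_deriv: "\<And>t. (g has_real_derivative h t) (at t)"
    and h_deriv: "\<And>t. (h has_real_derivative - s * g t) (at t)"
    and pythagoras: "\<And>t. h t ^ 2 + s * g t ^ 2 = 1"
    and g_0: "g 0 = 0" and h_0: "h 0 = 1"
    and abs_g_less_1: "\<And>t. t \<in> {-r<..<r} \<Longrightarrow> \<bar>g t\<bar> < 1"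
begin

lemma norm_g_less_fps_conv_radius:
  assumes "1 \<le> fps_conv_radius f" and "t \<in> {-r<..<r}"
  shows "norm (g t) < fps_conv_radius f"
  using abs_g_less_1[OF assms(2)] assms(1) by (metis ereal_less(3) less_le_trans real_norm_def)

lemma has_real_derivative_eval_fps_g:
  assumes "1 \<le> fps_conv_radius f" and "t \<in> {-r<..<r}"
  shows "((\<lambda>t. eval_fps f (g t)) has_real_derivative eval_fps (fps_deriv f) (g t) * h t) (at t)"
  using DERIV_chain2[OF has_field_derivative_eval_fps[OF norm_g_less_fps_conv_radius[OF assms]] g_deriv]
  by simp

lemma has_real_derivative_chebyshev_op:
  assumes R: "1 \<le> fps_conv_radius f" and t: "t \<in> {-r<..<r}"
  shows "((\<lambda>t. eval_fps (fps_deriv f) (g t) * h t) has_real_derivative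
           eval_fps (chebyshev_op s f) (g t)) (at t)"
proof -
  have "1 \<le> fps_conv_radius (fps_deriv f)"
    using R fps_conv_radius_deriv[of f] by (rule order_trans)
  note deriv = DERIV_mult[OF has_real_derivative_eval_fps_g[OF this t] h_deriv]
  have "h t * h t = 1 - s * g t ^ 2"
    using pythagoras[of t] by (simp add: power2_eq_square)
  then have "eval_fps (fps_deriv (fps_deriv f)) (g t) * h t * h t + - s * g t * eval_fps (fps_deriv f) (g t)
      = (1 - s * g t ^ 2) * eval_fps (fps_deriv (fps_deriv f)) (g t) - s * g t * eval_fps (fps_deriv f) (g t)"
    by (simp add: mult.assoc mult.commute)
  also have "\<dots> = eval_fps (chebyshev_op s f) (g t)"
    using eval_fps_chebyshev_op[OF norm_g_less_fps_conv_radius[OF R t]] by simp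
  finally show ?thesis
    using deriv by (rule DERIV_cong [rotated])
qed

lemma eval_arcsin_fps_g:
  assumes t: "t \<in> {-r<..<r}"
  shows "eval_fps (odd_fps s arcsin_coeff) (g t) = t"
proof -
  define P where "P = odd_fps s arcsin_coeff"
  have R: "1 \<le> fps_conv_radius P"
    unfolding P_def using abs_s_le_1 abs_arcsin_coeff_le_1 by (rule fps_conv_radius_odd_fps)
  have "chebyshev_op s P = fps_const s * odd_fps s (\<lambda>_. 0)"
    unfolding P_def using arcsin_coeff_Suc by (intro chebyshev_op_odd_fps) simp
  then have L: "chebyshev_op s P = 0"
    by simp
  have 0: "0 \<in> {-r<..<r}"
    using t by simp
  have slope: "eval_fps (fps_deriv P) (g x) * h x = 1" if x: "x \<in> {-r<..<r}" for x
  proof (rule antiderivative_unique_interval[OF _ _ 0 x])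
    show "((\<lambda>x. eval_fps (fps_deriv P) (g x) * h x) has_real_derivative 0) (at t)"
      if "t \<in> {-r<..<r}" for t
      using has_real_derivative_chebyshev_op[OF R that] by (simp add: L)
    show "eval_fps (fps_deriv P) (g 0) * h 0 = 1"
      by (simp add: g_0 h_0 eval_fps_at_0 P_def odd_fps_def arcsin_coeff_def)
  qed simp
  show ?thesis
    unfolding P_def [symmetric]
  proof (rule antiderivative_unique_interval[OF _ _ 0 t])
    show "((\<lambda>x. eval_fps P (g x)) has_real_derivative 1) (at x)" if "x \<in> {-r<..<r}" for x
      using has_real_derivative_eval_fps_g[OF R that] unfolding slope[OF that] .
    show "eval_fps P (g 0) = 0"
      by (simp add: g_0 eval_fps_at_0 P_def odd_fps_def)
  qed simp
qed

lemma eval_Hbar2_fps_g: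
  assumes t: "t \<in> {-r<..<r}"
  shows "eval_fps (odd_fps s (\<lambda>k. arcsin_coeff k * Hbar2 k)) (g t) = s * t ^ 3 / 6"
proof -
  define P Q where "P = odd_fps s arcsin_coeff" and "Q = odd_fps s (\<lambda>k. arcsin_coeff k * Hbar2 k)"
  have RP: "1 \<le> fps_conv_radius P"
    unfolding P_def using abs_s_le_1 abs_arcsin_coeff_le_1 by (rule fps_conv_radius_odd_fps)
  have RQ: "1 \<le> fps_conv_radius Q"
    unfolding Q_def using abs_s_le_1 abs_arcsin_coeff_Hbar2_le_1 by (rule fps_conv_radius_odd_fps)
  have L: "chebyshev_op s Q = fps_const s * P"
    unfolding P_def Q_def using arcsin_coeff_Hbar2_Suc by (rule chebyshev_op_odd_fps)
  have 0: "0 \<in> {-r<..<r}"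
    using t by simp
  have slope: "eval_fps (fps_deriv Q) (g x) * h x = s * x ^ 2 / 2" if x: "x \<in> {-r<..<r}" for x
  proof (rule antiderivative_unique_interval[OF _ _ 0 x])
    show "((\<lambda>x. eval_fps (fps_deriv Q) (g x) * h x) has_real_derivative s * t) (at t)"
      if "t \<in> {-r<..<r}" for t
    proof -
      have "eval_fps (chebyshev_op s Q) (g t) = s * eval_fps P (g t)"
        unfolding L using norm_g_less_fps_conv_radius[OF RP that] by (simp add: eval_fps_mult)
      with has_real_derivative_chebyshev_op[OF RQ that] show ?thesis
        unfolding P_def eval_arcsin_fps_g[OF that] by simp
    qed
    show "((\<lambda>x. s * x ^ 2 / 2) has_real_derivative s * t) (at t)" for t
      by (auto intro!: derivative_eq_intros)
    show "eval_fps (fps_deriv Q) (g 0) * h 0 = s * 0 ^ 2 / 2"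
      by (simp add: g_0 h_0 eval_fps_at_0 Q_def odd_fps_def)
  qed
  show ?thesis
    unfolding Q_def [symmetric]
  proof (rule antiderivative_unique_interval[OF _ _ 0 t])
    show "((\<lambda>x. eval_fps Q (g x)) has_real_derivative s * x ^ 2 / 2) (at x)" if "x \<in> {-r<..<r}" for x
      using has_real_derivative_eval_fps_g[OF RQ that] unfolding slope[OF that] .
    show "((\<lambda>x. s * x ^ 3 / 6) has_real_derivative s * x ^ 2 / 2) (at x)" for x
      by (auto intro!: derivative_eq_intros simp: power2_eq_square)
    show "eval_fps Q (g 0) = s * 0 ^ 3 / 6"
      by (simp add: g_0 eval_fps_at_0 Q_def odd_fps_def)
  qed
qed

lemma cterm_sums:
  assumes t: "t \<in> {-r<..<r}" and g_t: "g t \<noteq> 0"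
  shows "(\<lambda>k. cterm (s * g t ^ 2 / 4) k) sums (s * t ^ 3 / (6 * g t))"
proof -
  have "1 \<le> fps_conv_radius (odd_fps s (\<lambda>k. arcsin_coeff k * Hbar2 k))"
    using abs_s_le_1 abs_arcsin_coeff_Hbar2_le_1 by (rule fps_conv_radius_odd_fps)
  from sums_odd_fps[OF norm_g_less_fps_conv_radius[OF this t]]
  have "(\<lambda>k. s ^ k * (arcsin_coeff k * Hbar2 k) * g t ^ (2 * k + 1)) sums (s * t ^ 3 / 6)"
    unfolding eval_Hbar2_fps_g[OF t] .
  then have "(\<lambda>k. s ^ k * (arcsin_coeff k * Hbar2 k) * g t ^ (2 * k + 1) / g t) sums (s * t ^ 3 / 6 / g t)"
    by (rule sums_divide)
  moreover have "s ^ k * (arcsin_coeff k * Hbar2 k) * g t ^ (2 * k + 1) / g t = cterm (s * g t ^ 2 / 4) k" for k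
    using g_t by (simp add: cterm_conv_arcsin_coeff power_mult_distrib power_mult)
  ultimately show ?thesis
    by simp
qed

end

lemma abs_sin_less_1:
  assumes "t \<in> {-(pi/2)<..<pi/2}"
  shows "\<bar>sin t\<bar> < 1"
proof -
  have "0 < cos t"
    using assms by (intro cos_gt_zero_pi) auto
  then have "sin t ^ 2 < 1"
    using sin_cos_squared_add[of t] zero_less_power[of "cos t" 2] by linarith
  then show ?thesis
    by (simp add: abs_square_less_1)
qed

lemma abs_sinh_less_1:
  fixes t :: real
  assumes "t \<in> {-ln 2<..<ln 2}"
  shows "\<bar>sinh t\<bar> < 1"
proof -
  have "sinh (- ln 2) < sinh t" "sinh t < sinh (ln (2::real))"
    using assms by (simp_all only: sinh_real_less_iff greaterThanLessThan_iff)
  moreover have "sinh (ln (2::real)) = 3 / 4"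
    by (simp add: sinh_ln_real)
  ultimately show ?thesis
    by (simp add: sinh_minus)
qed

interpretation sin_cos: sine_pair 1 "pi / 2" sin cos
  by unfold_locales (auto intro!: derivative_eq_intros abs_sin_less_1 simp: sin_cos_squared_add2)

interpretation sinh_cosh: sine_pair "-1" "ln 2" sinh cosh
  by unfold_locales (auto intro!: derivative_eq_intros abs_sinh_less_1 simp: cosh_square_eq)

lemma cterm_sums_sin:
  assumes "t \<in> {-(pi/2)<..<pi/2}" and "sin t \<noteq> 0"
  shows "(\<lambda>k. cterm (sin t ^ 2 / 4) (k + 1)) sums (t ^ 3 / (6 * sin t))"
  using sin_cos.cterm_sums[OF assms] by simp

lemma cterm_sums_sinh:
  assumes "t \<in> {-ln 2<..<ln 2}" and "sinh t \<noteq> 0"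
  shows "cterm (- (sinh t ^ 2) / 4) sums (- (t ^ 3 / (6 * sinh t)))"
  using sinh_cosh.cterm_sums[OF assms] by simp

lemma cterm_sums_1_16: "(\<lambda>k. cterm (1/16) (k+1)) sums (pi^3 / 648)"
  using cterm_sums_sin[of "pi/6"] pi_gt_zero by (simp add: sin_30 power_divide)

lemma cterm_sums_1_8: "(\<lambda>k. cterm (1/8) (k+1)) sums (pi^3 / (192 * sqrt 2))"
  using cterm_sums_sin[of "pi/4"] pi_gt_zero by (simp add: sin_45 field_simps)

lemma cterm_sums_3_16: "(\<lambda>k. cterm (3/16) (k+1)) sums (pi^3 / (81 * sqrt 3))"
  using cterm_sums_sin[of "pi/3"] pi_gt_zero by (simp add: sin_60 field_simps)

lemma sinh_half_ln: "0 < x \<Longrightarrow> sinh (ln x / 2) = (x - 1) / (2 * sqrt x)"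
  using sinh_ln_real[of "sqrt x"] by (simp add: ln_sqrt field_simps)

lemma cterm_sums_neg_1_32: "(\<lambda>k. cterm (-1/32) k) sums (- (sqrt 2 / 24) * (ln 2)^3)"
proof -
  have "sinh (ln 2 / 2) = 1 / (2 * sqrt 2)"
    by (simp add: sinh_half_ln)
  with cterm_sums_sinh[of "ln 2 / 2"] show ?thesis
    by (simp add: field_simps)
qed

lemma cterm_sums_neg_1_12: "(\<lambda>k. cterm (-1/12) (k+1)) sums (- (sqrt 3 / 48) * (ln 3)^3)"
proof -
  have "0 < ln (3::real)" "ln 3 < ln (4::real)"
    by simp_all
  moreover have "ln (4::real) = 2 * ln 2"
    using ln_realpow[of 2 2] by simp
  ultimately have "ln 3 / 2 \<in> {-ln 2<..<ln (2::real)}"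
    unfolding greaterThanLessThan_iff by linarith
  moreover have "sinh (ln 3 / 2) = 1 / sqrt 3"
    by (simp add: sinh_half_ln)
  ultimately show ?thesis
    using cterm_sums_sinh[of "ln 3 / 2"] by (simp add: power_divide) (simp add: field_simps)
qed

lemma cterm_sums_neg_1_16: "(\<lambda>k. cterm (-1/16) (k+1)) sums (- (1/3) * (ln ((sqrt 5 + 1) / 2))^3)"
proof -
  define \<phi> :: real where "\<phi> = (sqrt 5 + 1) / 2"
  have "1 < \<phi>" "\<phi> < 2"
    using real_sqrt_less_iff[of 5 9] by (auto simp: \<phi>_def)
  then have "0 < ln \<phi>" "ln \<phi> < ln 2"
    by simp_all
  then have "ln \<phi> \<in> {-ln 2<..<ln 2}"
    by simp
  have "\<phi> * (\<phi> - 1) = 1"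
    by (simp add: \<phi>_def field_simps)
  then have "sinh (ln \<phi>) = 1 / 2"
    using \<open>1 < \<phi>\<close> by (simp add: sinh_ln_real inverse_unique)
  with cterm_sums_sinh[OF \<open>ln \<phi> \<in> {-ln 2<..<ln 2}\<close>] show ?thesis
    by (simp add: \<phi>_def [symmetric] power_divide)
qed

theorem corollary1p1:
  shows "((\<lambda>k. cterm (1/16) (k+1)) sums (pi^3 / 648)) \<and>
    ((\<lambda>k. cterm (1/8) (k+1)) sums (pi^3 / (192 * sqrt 2))) \<and>
    ((\<lambda>k. cterm (3/16) (k+1)) sums (pi^3 / (81 * sqrt 3))) \<and>
    ((\<lambda>k. cterm (-1/32) k) sums (- (sqrt 2 / 24) * (ln 2)^3)) \<and>
    ((\<lambda>k. cterm (-1/12) (k+1)) sums (- (sqrt 3 / 48) * (ln 3)^3)) \<and>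
    ((\<lambda>k. cterm (-1/16) (k+1)) sums (- (1/3) * (ln ((sqrt 5 + 1) / 2))^3))"
  using cterm_sums_1_16 cterm_sums_1_8 cterm_sums_3_16
    cterm_sums_neg_1_32 cterm_sums_neg_1_12 cterm_sums_neg_1_16
  by blast

end
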